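(* Let $V$ be a subset of $\mathbb{R}^n$ and $W$ a nonempty subset of $\mathbb{R}^m$. Let $f_1,\ldots,f_n\in\overline{\boldsymbol{T}(Y_1,\ldots,Y_m)}/\boldsymbol{E}(W)$ and suppose that the image of $\theta:W\to\boldsymbol{T}^n$, $y\mapsto(f_1(y),\ldots,f_n(y))$, is contained in $V$. Let $\theta^\ast:\overline{\boldsymbol{T}(X_1,\ldots,X_n)}/\boldsymbol{E}(V)\to F(W,\boldsymbol{T})$, $f\mapsto f\circ\theta$. Then: (1) $V\neq\varnothing$; (2) $\operatorname{Im}(\theta^\ast)\subset\overline{\boldsymbol{T}(Y_1,\ldots,Y_m)}/\boldsymbol{E}(W)\subset F(W,\boldsymbol{T})$; (3) $\theta^\ast$ is a $\boldsymbol{T}$-algebra homomorphism; (4) if $\operatorname{Im}(\theta)\supset V$, then $\theta^\ast$ is injective; (5) if $V$ and $W$ are homeomorphic via $\theta$ and there exist $g_1,\ldots,g_m\in\overline{\boldsymbol{T}(X_1,\ldots,X_n)}/\boldsymbol{E}(V)$ such that $\theta^{-1}(x)=(g_1(x),\ldots,g_m(x))$ for all $x\in V$, then $\overline{\boldsymbol{T}(X_1,\ldots,X_n)}/\boldsymbol{E}(V)$ and $\overline{\boldsymbol{T}(Y_1,\ldots,Y_m)}/\boldsymbol{E}(W)$ are isomorphic via $\theta^\ast$.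
   Context: $\boldsymbol{T}=\mathbb{R}\cup\{-\infty\}$ with $a\oplus b=\max\{a,b\}$, $a\odot b=a+b$. Semirings are commutative with $0,1$; $\boldsymbol{T}$-algebras are semirings with a semiring homomorphism from $\boldsymbol{T}$, and $\boldsymbol{T}$-algebra homomorphisms are compatible semiring homomorphisms (isomorphism = bijective one). $\overline{\boldsymbol{T}[X_1,\ldots,X_n]}$ is the tropical polynomial semiring modulo identifying polynomials defining the same function $\boldsymbol{T}^n\to\boldsymbol{T}$; it is cancellative and $\overline{\boldsymbol{T}(X_1,\ldots,X_n)}$ is its semifield of fractions. Each element defines a function $\mathbb{R}^n\to\boldsymbol{T}$ (quotients evaluated as differences). For $V\subset\mathbb{R}^n$, $\boldsymbol{E}(V)=\{(f,g)\mid f(x)=g(x)\ \forall x\in V\}$ is a congruence (an equivalence relation compatible with both operations) on $\overline{\boldsymbol{T}(X_1,\ldots,X_n)}$, and an element of the quotient $\overline{\boldsymbol{T}(X_1,\ldots,X_n)}/\boldsymbol{E}(V)$ is evaluated at $x\in V$ via any representative (well defined), so it defines a function $V\to\boldsymbol{T}$. $F(W,\boldsymbol{T})$ is the $\boldsymbol{T}$-algebra of all functions $W\to\boldsymbol{T}$ with pointwise operations, and $\overline{\boldsymbol{T}(Y_1,\ldots,Y_m)}/\boldsymbol{E}(W)$ is regarded as a subset of it via evaluation. *)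

theory Defs
  imports "HOL-Analysis.Analysis" "HOL-Library.Extended_Real"
begin

text \<open>The tropical semifield T = R \<union> {-\<infinity>} is modelled inside ereal
  (the value \<infinity> never occurs); tropical addition is max, tropical
  multiplication is +.\<close>

text \<open>Function R^n \<rightarrow> T of the tropical polynomial with finitely many terms
  a \<odot> X^k (a real, k a multi-exponent); empty term set gives -\<infinity>
  (terms with coefficient -\<infinity> are simply omitted).\<close>
definition trop_poly_fun :: "(real \<times> (nat^'n::finite)) set \<Rightarrow> real^'n \<Rightarrow> ereal" where
  "trop_poly_fun P x = (if P = {} then -\<infinity>
     else Max ((\<lambda>(a,k). ereal (a + (\<Sum>i\<in>UNIV. real (k$i) * x$i))) ` P))"

text \<open>Elements of the polynomial semiring modulo functional equality.\<close>
definition trop_poly :: "(real^'n::finite \<Rightarrow> ereal) set" where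
  "trop_poly = {trop_poly_fun P | P. finite P}"

text \<open>Elements of the semifield of fractions, as functions R^n \<rightarrow> T
  (quotients evaluated as differences; denominator nonzero).\<close>
definition trop_rat :: "(real^'n::finite \<Rightarrow> ereal) set" where
  "trop_rat = {(\<lambda>x. f x - g x) | f g. f \<in> trop_poly \<and> g \<in> trop_poly \<and> g \<noteq> (\<lambda>_. -\<infinity>)}"

definition restr :: "'a set \<Rightarrow> ('a \<Rightarrow> ereal) \<Rightarrow> 'a \<Rightarrow> ereal" where
  "restr S h = (\<lambda>x. if x \<in> S then h x else -\<infinity>)"

text \<open>The quotient T(X)/E(V), identified with the set of functions V \<rightarrow> T
  it induces (each class is determined by its values on V).\<close>
definition rat_quot :: "(real^'n::finite) set \<Rightarrow> (real^'n \<Rightarrow> ereal) set" where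
  "rat_quot V = restr V ` trop_rat"

definition FWT :: "'a set \<Rightarrow> ('a \<Rightarrow> ereal) set" where
  "FWT W = {h. (\<forall>y\<in>W. h y \<noteq> \<infinity>) \<and> (\<forall>y. y \<notin> W \<longrightarrow> h y = -\<infinity>)}"

text \<open>T-algebra homomorphism from T(X)/E(V) to F(W,T): preserves tropical
  addition and multiplication and is compatible with the structure maps
  c \<mapsto> constant c (hence also preserves 0 = -\<infinity> and 1 = 0).\<close>
definition trop_alg_hom :: "'a set \<Rightarrow> ('a \<Rightarrow> ereal) set \<Rightarrow> 'b set
    \<Rightarrow> (('a \<Rightarrow> ereal) \<Rightarrow> ('b \<Rightarrow> ereal)) \<Rightarrow> bool" where
  "trop_alg_hom V A W \<phi> \<longleftrightarrow>
     (\<forall>a\<in>A. \<forall>b\<in>A. \<phi> (\<lambda>x. max (a x) (b x)) = (\<lambda>y. max (\<phi> a y) (\<phi> b y))) \<and>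
     (\<forall>a\<in>A. \<forall>b\<in>A. \<phi> (\<lambda>x. a x + b x) = (\<lambda>y. \<phi> a y + \<phi> b y)) \<and>
     (\<forall>c. c \<noteq> \<infinity> \<longrightarrow> \<phi> (restr V (\<lambda>_. c)) = restr W (\<lambda>_. c))"

end

theory Submission
  imports Defs
begin

text \<open>Tropical rational functions are closed under substitution of real-valued tropical
  rational functions: if every coordinate of \<theta> agrees on W with a tropical rational
  function, then composing with \<theta> turns a monomial a \<odot> X^k into the nat-linear combination
  a + \<Sum> k_i \<theta>_i, a tropical polynomial into a maximum of such, and a quotient p - q into one
  whose denominator q \<circ> \<theta> is real-valued and can therefore be cleared.  The remaining parts
  are pointwise: pulling back along \<theta> respects max, + and constants, is injective when \<theta>
  hits all of V, and is inverted by pulling back along \<theta>\<inverse> once the coordinates of \<theta>\<inverse>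
  are tropical rational as well.\<close>

abbreviation trop_term :: "real \<times> (nat^'n::finite) \<Rightarrow> real^'n \<Rightarrow> ereal" where
  "trop_term t x \<equiv> case t of (a, k) \<Rightarrow> ereal (a + (\<Sum>i\<in>UNIV. real (k$i) * x$i))"

lemma trop_poly_fun_empty [simp]: "trop_poly_fun {} = (\<lambda>_. -\<infinity>)"
  by (auto simp: trop_poly_fun_def)

lemma trop_poly_fun_eq_Max:
  "finite P \<Longrightarrow> P \<noteq> {} \<Longrightarrow> trop_poly_fun P x = Max ((\<lambda>t. trop_term t x) ` P)"
  by (simp add: trop_poly_fun_def case_prod_beta)

lemma trop_poly_fun_real:
  assumes "finite P" "P \<noteq> {}"
  shows "\<exists>r. trop_poly_fun P x = ereal r"
proof -
  have "Max ((\<lambda>t. trop_term t x) ` P) \<in> (\<lambda>t. trop_term t x) ` P"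
    using assms by (intro Max_in) auto
  then obtain t where "t \<in> P" "Max ((\<lambda>t. trop_term t x) ` P) = trop_term t x"
    by auto
  then show ?thesis
    using assms by (auto simp: trop_poly_fun_eq_Max split: prod.splits)
qed

lemma trop_poly_fun_Un:
  assumes "finite P" "finite Q"
  shows "trop_poly_fun (P \<union> Q) x = max (trop_poly_fun P x) (trop_poly_fun Q x)"
  using assms by (cases "P = {} \<or> Q = {}") (auto simp: trop_poly_fun_eq_Max image_Un Max_Un)

lemma trop_poly_fun_insert:
  "finite P \<Longrightarrow> trop_poly_fun (insert t P) x = max (trop_term t x) (trop_poly_fun P x)"
  using trop_poly_fun_Un[of "{t}" P x] by (simp add: trop_poly_fun_def case_prod_beta)

lemma trop_polyI: "finite P \<Longrightarrow> trop_poly_fun P \<in> trop_poly"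
  by (auto simp: trop_poly_def)

lemma trop_polyE:
  assumes "p \<in> trop_poly"
  obtains P where "finite P" "p = trop_poly_fun P"
  using assms by (auto simp: trop_poly_def)

lemma trop_poly_real:
  assumes "p \<in> trop_poly" "p \<noteq> (\<lambda>_. -\<infinity>)"
  shows "\<exists>r. p x = ereal r"
  using assms by (elim trop_polyE) (metis trop_poly_fun_empty trop_poly_fun_real)

lemma trop_poly_neq_PInf: "p \<in> trop_poly \<Longrightarrow> p x \<noteq> \<infinity>"
  by (cases "p = (\<lambda>_. -\<infinity>)") (auto dest: trop_poly_real[of p x])

lemma trop_poly_const: "(\<lambda>_::real^'n::finite. ereal c) \<in> trop_poly"
proof -
  have "trop_poly_fun {(c, 0::nat^'n)} = (\<lambda>_. ereal c)"
    by (auto simp: trop_poly_fun_def)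
  then show ?thesis
    using trop_polyI[of "{(c, 0::nat^'n)}"] by simp
qed

lemma trop_poly_bot: "(\<lambda>_. -\<infinity>) \<in> trop_poly"
  using trop_polyI[of "{}"] by simp

lemma trop_poly_max:
  assumes "p \<in> trop_poly" "q \<in> trop_poly"
  shows "(\<lambda>x. max (p x) (q x)) \<in> trop_poly"
proof -
  obtain P Q where "finite P" "p = trop_poly_fun P" "finite Q" "q = trop_poly_fun Q"
    using assms by (elim trop_polyE)
  then have "(\<lambda>x. max (p x) (q x)) = trop_poly_fun (P \<union> Q)"
    by (simp add: trop_poly_fun_Un fun_eq_iff)
  then show ?thesis
    using \<open>finite P\<close> \<open>finite Q\<close> trop_polyI[of "P \<union> Q"] by simp
qed

lemma Max_add_Max:
  fixes F G :: "_ \<Rightarrow> 'a::{linorder, ordered_ab_semigroup_add}"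
  assumes "finite P" "finite Q" "P \<noteq> {}" "Q \<noteq> {}"
  shows "Max ((\<lambda>(p, q). F p + G q) ` (P \<times> Q)) = Max (F ` P) + Max (G ` Q)"
proof (rule Max_eqI)
  obtain p0 q0 where "p0 \<in> P" "F p0 = Max (F ` P)" "q0 \<in> Q" "G q0 = Max (G ` Q)"
    using assms Max_in[of "F ` P"] Max_in[of "G ` Q"]
    by (metis (no_types, lifting) finite_imageI imageE image_is_empty)
  then show "Max (F ` P) + Max (G ` Q) \<in> (\<lambda>(p, q). F p + G q) ` (P \<times> Q)"
    by (auto intro!: image_eqI[where x = "(p0, q0)"])
next
  fix y
  assume "y \<in> (\<lambda>(p, q). F p + G q) ` (P \<times> Q)"
  then show "y \<le> Max (F ` P) + Max (G ` Q)"
    using assms by (auto intro!: add_mono)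
qed (use assms in auto)

lemma trop_poly_add:
  assumes "p \<in> trop_poly" "q \<in> trop_poly"
  shows "(\<lambda>x. p x + q x) \<in> trop_poly"
proof -
  obtain P Q where PQ: "finite P" "p = trop_poly_fun P" "finite Q" "q = trop_poly_fun Q"
    using assms by (elim trop_polyE)
  define R where "R = (\<lambda>((a, k), (b, l)). (a + b, k + l)) ` (P \<times> Q)"
  have "p x + q x = trop_poly_fun R x" for x
  proof (cases "P = {} \<or> Q = {}")
    case True
    then show ?thesis
      using PQ trop_poly_neq_PInf[OF assms(1), of x] trop_poly_neq_PInf[OF assms(2), of x]
      by (auto simp: R_def)
  next
    case False
    have "(\<lambda>t. trop_term t x) ` R = (\<lambda>(s, t). trop_term s x + trop_term t x) ` (P \<times> Q)"
      unfolding R_def image_image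
      by (rule image_cong) (auto simp: sum.distrib algebra_simps)
    then have "trop_poly_fun R x = Max ((\<lambda>(s, t). trop_term s x + trop_term t x) ` (P \<times> Q))"
      using PQ False by (simp add: trop_poly_fun_eq_Max R_def)
    also have "\<dots> = p x + q x"
      using PQ False by (simp add: Max_add_Max trop_poly_fun_eq_Max)
    finally show ?thesis
      by simp
  qed
  then show ?thesis
    using PQ trop_polyI[of R] by (simp add: R_def fun_eq_iff)
qed

lemma trop_poly_add_neq_bot:
  assumes "p \<in> trop_poly" "p \<noteq> (\<lambda>_. -\<infinity>)" "q \<in> trop_poly" "q \<noteq> (\<lambda>_. -\<infinity>)"
  shows "(\<lambda>x. p x + q x) \<noteq> (\<lambda>_. -\<infinity>)"
proof
  assume "(\<lambda>x. p x + q x) = (\<lambda>_. -\<infinity>)"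
  then have "p 0 + q 0 = -\<infinity>"
    by metis
  then show False
    using trop_poly_real[OF assms(1,2), of 0] trop_poly_real[OF assms(3,4), of 0] by auto
qed

definition trop_rat_on :: "(real^'n::finite) set \<Rightarrow> (real^'n \<Rightarrow> ereal) \<Rightarrow> bool" where
  "trop_rat_on A h \<longleftrightarrow>
     (\<exists>p\<in>trop_poly. \<exists>q\<in>trop_poly. q \<noteq> (\<lambda>_. -\<infinity>) \<and> (\<forall>y\<in>A. h y = p y - q y))"

lemma trop_rat_onI:
  "p \<in> trop_poly \<Longrightarrow> q \<in> trop_poly \<Longrightarrow> q \<noteq> (\<lambda>_. -\<infinity>) \<Longrightarrow> (\<And>y. y \<in> A \<Longrightarrow> h y = p y - q y)
    \<Longrightarrow> trop_rat_on A h"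
  by (auto simp: trop_rat_on_def)

lemma trop_rat_onE:
  assumes "trop_rat_on A h"
  obtains p q where "p \<in> trop_poly" "q \<in> trop_poly" "q \<noteq> (\<lambda>_. -\<infinity>)"
    "\<And>x. \<exists>b. q x = ereal b" "\<And>y. y \<in> A \<Longrightarrow> h y = p y - q y"
proof -
  obtain p q where "p \<in> trop_poly" "q \<in> trop_poly" "q \<noteq> (\<lambda>_. -\<infinity>)" "\<forall>y\<in>A. h y = p y - q y"
    using assms by (auto simp: trop_rat_on_def)
  then show thesis
    using that trop_poly_real by blast
qed

lemma trop_rat_on_iff_restr_in_rat_quot: "trop_rat_on A h \<longleftrightarrow> restr A h \<in> rat_quot A"
proof
  assume "trop_rat_on A h"
  then obtain p q where "p \<in> trop_poly" "q \<in> trop_poly" "q \<noteq> (\<lambda>_. -\<infinity>)"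
    and "\<And>y. y \<in> A \<Longrightarrow> h y = p y - q y"
    by (elim trop_rat_onE) blast
  then have "restr A h = restr A (\<lambda>x. p x - q x)" "(\<lambda>x. p x - q x) \<in> trop_rat"
    by (auto simp: restr_def trop_rat_def)
  then show "restr A h \<in> rat_quot A"
    by (simp add: rat_quot_def)
next
  assume "restr A h \<in> rat_quot A"
  then show "trop_rat_on A h"
    by (auto simp: rat_quot_def trop_rat_def trop_rat_on_def restr_def fun_eq_iff) metis
qed

lemma rat_quot_outside: "h \<in> rat_quot A \<Longrightarrow> y \<notin> A \<Longrightarrow> h y = -\<infinity>"
  by (auto simp: rat_quot_def restr_def)

lemma restr_rat_quot: "h \<in> rat_quot A \<Longrightarrow> restr A h = h"
  by (auto simp: restr_def rat_quot_outside)

lemma trop_rat_on_rat_quot: "h \<in> rat_quot A \<Longrightarrow> trop_rat_on A h"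
  by (simp add: trop_rat_on_iff_restr_in_rat_quot restr_rat_quot)

lemma rat_quot_neq_PInf:
  assumes "h \<in> rat_quot A"
  shows "h y \<noteq> \<infinity>"
proof (cases "y \<in> A")
  case True
  then obtain p q where "p \<in> trop_poly" "\<exists>b. q y = ereal b" "h y = p y - q y"
    using trop_rat_on_rat_quot[OF assms] by (elim trop_rat_onE) blast
  then show ?thesis
    using trop_poly_neq_PInf[of p y] by (cases "p y") auto
qed (simp add: rat_quot_outside[OF assms])

lemma trop_rat_on_cong: "trop_rat_on A h \<Longrightarrow> (\<And>y. y \<in> A \<Longrightarrow> h y = h' y) \<Longrightarrow> trop_rat_on A h'"
  by (auto simp: trop_rat_on_def)

lemma trop_rat_on_trop_poly: "p \<in> trop_poly \<Longrightarrow> trop_rat_on A p"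
  by (rule trop_rat_onI[OF _ trop_poly_const[of 0]]) (auto simp: fun_eq_iff zero_ereal_def[symmetric])

lemma trop_rat_on_real_of_ereal:
  assumes "h \<in> rat_quot A" "\<And>y. y \<in> A \<Longrightarrow> h y \<noteq> -\<infinity>"
  shows "trop_rat_on A (\<lambda>y. ereal (real_of_ereal (h y)))"
proof (rule trop_rat_on_cong[OF trop_rat_on_rat_quot[OF assms(1)]])
  show "h y = ereal (real_of_ereal (h y))" if "y \<in> A" for y
    using assms(2)[OF that] rat_quot_neq_PInf[OF assms(1), of y] by (cases "h y") auto
qed

lemma trop_rat_on_max:
  assumes "trop_rat_on A h1" "trop_rat_on A h2"
  shows "trop_rat_on A (\<lambda>y. max (h1 y) (h2 y))"
proof -
  obtain p1 q1 where 1: "p1 \<in> trop_poly" "q1 \<in> trop_poly" "q1 \<noteq> (\<lambda>_. -\<infinity>)"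
    "\<And>x. \<exists>b. q1 x = ereal b" "\<And>y. y \<in> A \<Longrightarrow> h1 y = p1 y - q1 y"
    using assms(1) by (elim trop_rat_onE) blast
  obtain p2 q2 where 2: "p2 \<in> trop_poly" "q2 \<in> trop_poly" "q2 \<noteq> (\<lambda>_. -\<infinity>)"
    "\<And>x. \<exists>b. q2 x = ereal b" "\<And>y. y \<in> A \<Longrightarrow> h2 y = p2 y - q2 y"
    using assms(2) by (elim trop_rat_onE) blast
  show ?thesis
  proof (rule trop_rat_onI)
    fix y
    assume "y \<in> A"
    moreover obtain a b where "q1 y = ereal a" "q2 y = ereal b"
      using 1 2 by metis
    ultimately show "max (h1 y) (h2 y) = max (p1 y + q2 y) (p2 y + q1 y) - (q1 y + q2 y)"
      using 1 2 by (cases "p1 y"; cases "p2 y") (auto simp: max_def)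
  qed (intro trop_poly_max trop_poly_add trop_poly_add_neq_bot 1(1-3) 2(1-3))+
qed

lemma trop_rat_on_add:
  assumes "trop_rat_on A h1" "trop_rat_on A h2"
  shows "trop_rat_on A (\<lambda>y. h1 y + h2 y)"
proof -
  obtain p1 q1 where 1: "p1 \<in> trop_poly" "q1 \<in> trop_poly" "q1 \<noteq> (\<lambda>_. -\<infinity>)"
    "\<And>x. \<exists>b. q1 x = ereal b" "\<And>y. y \<in> A \<Longrightarrow> h1 y = p1 y - q1 y"
    using assms(1) by (elim trop_rat_onE) blast
  obtain p2 q2 where 2: "p2 \<in> trop_poly" "q2 \<in> trop_poly" "q2 \<noteq> (\<lambda>_. -\<infinity>)"
    "\<And>x. \<exists>b. q2 x = ereal b" "\<And>y. y \<in> A \<Longrightarrow> h2 y = p2 y - q2 y"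
    using assms(2) by (elim trop_rat_onE) blast
  show ?thesis
  proof (rule trop_rat_onI)
    fix y
    assume "y \<in> A"
    moreover obtain a b where "q1 y = ereal a" "q2 y = ereal b"
      using 1 2 by metis
    moreover have "p1 y \<noteq> \<infinity>" "p2 y \<noteq> \<infinity>"
      using trop_poly_neq_PInf[OF 1(1)] trop_poly_neq_PInf[OF 2(1)] by auto
    ultimately show "h1 y + h2 y = (p1 y + p2 y) - (q1 y + q2 y)"
      using 1 2 by (cases "p1 y"; cases "p2 y") auto
  qed (intro trop_poly_add trop_poly_add_neq_bot 1(1-3) 2(1-3))+
qed

lemma trop_rat_on_diff_real:
  assumes "trop_rat_on A h" "trop_rat_on A (\<lambda>y. ereal (u y))"
  shows "trop_rat_on A (\<lambda>y. h y - ereal (u y))"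
proof (cases "A = {}")
  case True
  then show ?thesis
    by (intro trop_rat_onI[OF trop_poly_const trop_poly_const]) (auto simp: fun_eq_iff)
next
  case False
  obtain p1 q1 where 1: "p1 \<in> trop_poly" "q1 \<in> trop_poly" "q1 \<noteq> (\<lambda>_. -\<infinity>)"
    "\<And>x. \<exists>b. q1 x = ereal b" "\<And>y. y \<in> A \<Longrightarrow> h y = p1 y - q1 y"
    using assms(1) by (elim trop_rat_onE) blast
  obtain p2 q2 where 2: "p2 \<in> trop_poly" "q2 \<in> trop_poly" "q2 \<noteq> (\<lambda>_. -\<infinity>)"
    "\<And>x. \<exists>b. q2 x = ereal b" "\<And>y. y \<in> A \<Longrightarrow> ereal (u y) = p2 y - q2 y"
    using assms(2) by (elim trop_rat_onE) blast
  have p2_real: "\<exists>c. p2 y = ereal c" if "y \<in> A" for y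
    using 2(4,5)[of y] that by (cases "p2 y") auto
  then have "p2 \<noteq> (\<lambda>_. -\<infinity>)"
    using False by fastforce
  show ?thesis
  proof (rule trop_rat_onI)
    fix y
    assume "y \<in> A"
    moreover obtain a b c where "q1 y = ereal a" "q2 y = ereal b" "p2 y = ereal c"
      using 1 2 p2_real \<open>y \<in> A\<close> by metis
    ultimately show "h y - ereal (u y) = (p1 y + q2 y) - (q1 y + p2 y)"
      using 1 2 by (cases "p1 y") auto
  qed (intro trop_poly_add trop_poly_add_neq_bot 1(1-3) 2(1,2) \<open>p2 \<noteq> (\<lambda>_. -\<infinity>)\<close>)+
qed

lemma trop_rat_on_real_add:
  "trop_rat_on A (\<lambda>y. ereal (u y)) \<Longrightarrow> trop_rat_on A (\<lambda>y. ereal (v y))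
    \<Longrightarrow> trop_rat_on A (\<lambda>y. ereal (u y + v y))"
  using trop_rat_on_add[of A "\<lambda>y. ereal (u y)" "\<lambda>y. ereal (v y)"] by simp

lemma trop_rat_on_real_of_nat_mult:
  "trop_rat_on A (\<lambda>y. ereal (u y)) \<Longrightarrow> trop_rat_on A (\<lambda>y. ereal (real k * u y))"
proof (induction k)
  case 0
  then show ?case
    using trop_rat_on_trop_poly[OF trop_poly_const[of 0]] by simp
next
  case (Suc k)
  then have "trop_rat_on A (\<lambda>y. ereal (u y + real k * u y))"
    by (intro trop_rat_on_real_add)
  then show ?case
    by (simp add: algebra_simps)
qed

lemma trop_rat_on_real_sum:
  "finite S \<Longrightarrow> (\<And>i. trop_rat_on A (\<lambda>y. ereal (g i y)))
    \<Longrightarrow> trop_rat_on A (\<lambda>y. ereal (\<Sum>i\<in>S. g i y))"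
proof (induction S rule: finite_induct)
  case empty
  then show ?case
    using trop_rat_on_trop_poly[OF trop_poly_const[of 0]] by simp
qed (simp add: trop_rat_on_real_add)

lemma trop_rat_on_comp:
  fixes \<theta> :: "real^'m::finite \<Rightarrow> real^'n::finite"
  assumes coord: "\<And>i. trop_rat_on A (\<lambda>y. ereal (\<theta> y $ i))" and "r \<in> trop_rat"
  shows "trop_rat_on A (\<lambda>y. r (\<theta> y))"
proof -
  have monomial: "trop_rat_on A (\<lambda>y. trop_term t (\<theta> y))" for t :: "real \<times> (nat^'n)"
  proof (cases t)
    case (Pair a k)
    have "trop_rat_on A (\<lambda>y. ereal (a + (\<Sum>i\<in>UNIV. real (k$i) * \<theta> y $ i)))"
      by (intro trop_rat_on_real_add trop_rat_on_real_sum trop_rat_on_real_of_nat_mult coord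
          trop_rat_on_trop_poly trop_poly_const finite)
    then show ?thesis
      by (simp add: Pair)
  qed
  have poly: "trop_rat_on A (\<lambda>y. trop_poly_fun P (\<theta> y))" if "finite P" for P
    using that
  proof (induction P rule: finite_induct)
    case empty
    then show ?case
      using trop_rat_on_trop_poly[OF trop_poly_bot] by simp
  qed (simp add: trop_poly_fun_insert trop_rat_on_max monomial)
  then have poly_comp: "trop_rat_on A (\<lambda>y. s (\<theta> y))" if "s \<in> trop_poly" for s
    using that by (elim trop_polyE) simp
  obtain p q where pq: "p \<in> trop_poly" "q \<in> trop_poly" "q \<noteq> (\<lambda>_. -\<infinity>)" "r = (\<lambda>x. p x - q x)"
    using \<open>r \<in> trop_rat\<close> by (auto simp: trop_rat_def)
  have q_real: "q x = ereal (real_of_ereal (q x))" for x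
    using trop_poly_real[OF pq(2,3), of x] by auto
  have "trop_rat_on A (\<lambda>y. p (\<theta> y) - ereal (real_of_ereal (q (\<theta> y))))"
    using poly_comp[OF pq(1)] trop_rat_on_cong[OF poly_comp[OF pq(2)] q_real]
    by (rule trop_rat_on_diff_real)
  then show ?thesis
    using pq(4) q_real by simp
qed

definition pullback :: "'b set \<Rightarrow> ('b \<Rightarrow> 'a) \<Rightarrow> ('a \<Rightarrow> ereal) \<Rightarrow> 'b \<Rightarrow> ereal" where
  "pullback W \<theta> h = restr W (\<lambda>y. h (\<theta> y))"

lemma pullback_in_rat_quot:
  assumes "\<And>i. trop_rat_on W (\<lambda>y. ereal (\<theta> y $ i))" "\<theta> ` W \<subseteq> V" "h \<in> rat_quot V"
  shows "pullback W \<theta> h \<in> rat_quot W"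
proof -
  obtain r where "r \<in> trop_rat" "h = restr V r"
    using \<open>h \<in> rat_quot V\<close> by (auto simp: rat_quot_def)
  moreover from this have "pullback W \<theta> h = restr W (\<lambda>y. r (\<theta> y))"
    using \<open>\<theta> ` W \<subseteq> V\<close> by (auto simp: pullback_def restr_def fun_eq_iff image_subset_iff)
  ultimately show ?thesis
    using trop_rat_on_comp[OF assms(1)] by (simp add: trop_rat_on_iff_restr_in_rat_quot)
qed

lemma rat_quot_subset_FWT: "rat_quot W \<subseteq> FWT W"
  by (auto simp: FWT_def rat_quot_neq_PInf rat_quot_outside)

lemma trop_alg_hom_pullback: "\<theta> ` W \<subseteq> V \<Longrightarrow> trop_alg_hom V A W (pullback W \<theta>)"
  by (auto simp: trop_alg_hom_def pullback_def restr_def fun_eq_iff)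

lemma inj_on_pullback:
  assumes "V \<subseteq> \<theta> ` W"
  shows "inj_on (pullback W \<theta>) (rat_quot V)"
proof (rule inj_onI)
  fix a b
  assume a: "a \<in> rat_quot V" and b: "b \<in> rat_quot V"
    and eq: "pullback W \<theta> a = pullback W \<theta> b"
  have "a x = b x" for x
  proof (cases "x \<in> V")
    case True
    then obtain y where "y \<in> W" "x = \<theta> y"
      using assms by blast
    then show ?thesis
      using fun_cong[OF eq, of y] by (simp add: pullback_def restr_def)
  qed (metis a b rat_quot_outside)
  then show "a = b" ..
qed

lemma pullback_pullback_inverse:
  assumes "\<theta> ` W \<subseteq> V" "\<And>y. y \<in> W \<Longrightarrow> \<psi> (\<theta> y) = y" "h \<in> rat_quot W"
  shows "pullback W \<theta> (pullback V \<psi> h) = h"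
  using assms by (auto simp: pullback_def restr_def fun_eq_iff rat_quot_outside)

lemma bij_betw_pullback:
  assumes "\<And>i. trop_rat_on W (\<lambda>y. ereal (\<theta> y $ i))" "\<And>j. trop_rat_on V (\<lambda>x. ereal (\<psi> x $ j))"
    and "\<theta> ` W = V" "\<psi> ` V \<subseteq> W" "\<And>y. y \<in> W \<Longrightarrow> \<psi> (\<theta> y) = y"
  shows "bij_betw (pullback W \<theta>) (rat_quot V) (rat_quot W)"
proof (rule bij_betw_imageI)
  show "inj_on (pullback W \<theta>) (rat_quot V)"
    using assms(3) by (simp add: inj_on_pullback)
  have "h \<in> pullback W \<theta> ` rat_quot V" if "h \<in> rat_quot W" for h
  proof
    show "pullback V \<psi> h \<in> rat_quot V"
      using assms(2,4) that by (rule pullback_in_rat_quot)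
    show "h = pullback W \<theta> (pullback V \<psi> h)"
      using assms(3,5) that by (simp add: pullback_pullback_inverse)
  qed
  moreover have "pullback W \<theta> h \<in> rat_quot W" if "h \<in> rat_quot V" for h
    using assms(1) equalityD1[OF assms(3)] that by (rule pullback_in_rat_quot)
  ultimately show "pullback W \<theta> ` rat_quot V = rat_quot W"
    by blast
qed

theorem proposition3p21:
  fixes V :: "(real^'n::finite) set" and W :: "(real^'m::finite) set"
    and f :: "'n \<Rightarrow> real^'m \<Rightarrow> ereal"
  defines "\<theta> \<equiv> \<lambda>y. (\<chi> i. real_of_ereal (f i y)) :: real^'n"
  defines "\<theta>s \<equiv> \<lambda>h. restr W (\<lambda>y. h (\<theta> y))"
  assumes W_ne: "W \<noteq> {}"
    and f_in: "\<forall>i. f i \<in> rat_quot W"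
    and f_real: "\<forall>y\<in>W. \<forall>i. f i y \<noteq> -\<infinity>"
    and im: "\<theta> ` W \<subseteq> V"
  shows "V \<noteq> {} \<and>
    (\<theta>s ` rat_quot V \<subseteq> rat_quot W \<and> rat_quot W \<subseteq> FWT W) \<and>
    trop_alg_hom V (rat_quot V) W \<theta>s \<and>
    (V \<subseteq> \<theta> ` W \<longrightarrow> inj_on \<theta>s (rat_quot V)) \<and>
    ((\<exists>\<psi>. homeomorphism W V \<theta> \<psi> \<and>
            (\<exists>g :: 'm \<Rightarrow> real^'n \<Rightarrow> ereal. (\<forall>j. g j \<in> rat_quot V) \<and>
               (\<forall>x\<in>V. \<forall>j. g j x = ereal (\<psi> x $ j))))
         \<longrightarrow> trop_alg_hom V (rat_quot V) W \<theta>s \<and> bij_betw \<theta>s (rat_quot V) (rat_quot W))"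
proof -
  have coords: "trop_rat_on W (\<lambda>y. ereal (\<theta> y $ i))" for i
    using trop_rat_on_real_of_ereal[of "f i" W] f_in f_real by (simp add: \<theta>_def)
  have pullback: "\<theta>s = pullback W \<theta>"
    by (simp add: \<theta>s_def pullback_def fun_eq_iff)
  have hom: "trop_alg_hom V (rat_quot V) W \<theta>s"
    unfolding pullback using im by (rule trop_alg_hom_pullback)
  have bij: "bij_betw \<theta>s (rat_quot V) (rat_quot W)"
    if "homeomorphism W V \<theta> \<psi>" "\<forall>j. g j \<in> rat_quot V" "\<forall>x\<in>V. \<forall>j. g j x = ereal (\<psi> x $ j)"
    for \<psi> and g :: "'m \<Rightarrow> real^'n \<Rightarrow> ereal"
    unfolding pullback
  proof (rule bij_betw_pullback[OF coords])
    show "trop_rat_on V (\<lambda>x. ereal (\<psi> x $ j))" for j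
      by (rule trop_rat_on_cong[OF trop_rat_on_rat_quot[of "g j"]]) (use that(2,3) in auto)
    show "\<theta> ` W = V" "\<psi> ` V \<subseteq> W" "\<And>y. y \<in> W \<Longrightarrow> \<psi> (\<theta> y) = y"
      using that(1) by (auto simp: homeomorphism_image1 homeomorphism_image2 homeomorphism_apply1)
  qed
  show ?thesis
  proof (intro conjI impI)
    show "V \<noteq> {}"
      using W_ne im by blast
    show "\<theta>s ` rat_quot V \<subseteq> rat_quot W"
      unfolding pullback using pullback_in_rat_quot[OF coords im] by blast
    show "rat_quot W \<subseteq> FWT W"
      by (rule rat_quot_subset_FWT)
    show "inj_on \<theta>s (rat_quot V)" if "V \<subseteq> \<theta> ` W"
      unfolding pullback using that by (rule inj_on_pullback)
  qed (use rat_quot_subset_FWT hom bij in blast)+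
qed

end
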